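(* Let $P[1..m]$ and $S[1..m]$ be strings of the same length over a totally ordered alphabet. Then $$S[\mathcal{PP}_P(i)]\preceq S[i]\preceq S[\mathcal{PC}_P(i)]\ \text{ for all } 1\le i\le m$$ holds if and only if $$S[\mathcal{GP}_P(i)]\preceq S[i]\ \text{ for all } 1\le i\le m.$$
   Context: A string $S$ is a finite sequence $S[1],S[2],\dots$ over an alphabet $\Sigma$ with a total order $<$; $S[i..j]$ denotes the substring $S[i]\cdots S[j]$ (empty if $i>j$). For positions $i,j$ of $S$, write $S[i]\prec S[j]$ iff either $S[i]<S[j]$, or $S[i]$ and $S[j]$ have the same value and $i<j$; write $S[i]\preceq S[j]$ iff $S[i]\prec S[j]$ or $i=j$. Minimum elements are taken with respect to $\prec$ (leftmost among equal minimal values). Prefix-parent representation: $\mathcal{PP}_S(i)=\max\{j: 1\le j<i,\ S[j]\prec S[i]\}$ if such $j$ exists, and $\mathcal{PP}_S(i)=i$ otherwise. Prefix-child representation: $\mathcal{PC}_S(1)=1$, and for $i\ge 2$: if $\mathcal{PP}_S(i)=i$, then $\mathcal{PC}_S(i)$ is the index $j\in[1,i-1]$ such that $S[j]$ is the minimum of $S[1..i-1]$; if $\mathcal{PP}_S(i)=i-1$, then $\mathcal{PC}_S(i)=i$; if $\mathcal{PP}_S(i)<i-1$, then $\mathcal{PC}_S(i)$ is the index $j$ with $\mathcal{PP}_S(i)<j<i$ such that $S[j]$ is the minimum of $S[\mathcal{PP}_S(i)+1..i-1]$. Global-parent representation: $\mathcal{GP}_S(i)=j$ if there is an index $j>i$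 with $\mathcal{PC}_S(j)=i$ (there is at most one such $j$), and $\mathcal{GP}_S(i)=\mathcal{PP}_S(i)$ otherwise. *)

theory Defs
  imports Main
begin

text \<open>Strings are modelled as functions from positions to a linearly ordered
alphabet; a string of length m is S restricted to positions 1..m.\<close>

definition prec :: "(nat \<Rightarrow> 'a::linorder) \<Rightarrow> nat \<Rightarrow> nat \<Rightarrow> bool" where
  "prec S i j \<longleftrightarrow> S i < S j \<or> (S i = S j \<and> i < j)"

definition preceq :: "(nat \<Rightarrow> 'a::linorder) \<Rightarrow> nat \<Rightarrow> nat \<Rightarrow> bool" where
  "preceq S i j \<longleftrightarrow> prec S i j \<or> i = j"

definition minidx :: "(nat \<Rightarrow> 'a::linorder) \<Rightarrow> nat \<Rightarrow> nat \<Rightarrow> nat" where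
  "minidx S a b = (THE j. a \<le> j \<and> j \<le> b \<and> (\<forall>k. a \<le> k \<and> k \<le> b \<longrightarrow> preceq S j k))"

definition PP :: "(nat \<Rightarrow> 'a::linorder) \<Rightarrow> nat \<Rightarrow> nat" where
  "PP S i = (if \<exists>j. 1 \<le> j \<and> j < i \<and> prec S j i
             then Max {j. 1 \<le> j \<and> j < i \<and> prec S j i} else i)"

definition PC :: "(nat \<Rightarrow> 'a::linorder) \<Rightarrow> nat \<Rightarrow> nat" where
  "PC S i = (if i = 1 then 1
             else if PP S i = i then minidx S 1 (i - 1)
             else if PP S i = i - 1 then i
             else minidx S (PP S i + 1) (i - 1))"

definition GP :: "(nat \<Rightarrow> 'a::linorder) \<Rightarrow> nat \<Rightarrow> nat \<Rightarrow> nat" where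
  "GP S m i = (if \<exists>j. i < j \<and> j \<le> m \<and> PC S j = i
               then (THE j. i < j \<and> j \<le> m \<and> PC S j = i) else PP S i)"

end

theory Submission
  imports Defs "HOL-Library.Product_Lexorder"
begin

text \<open>
Call j a child of c if c = PC P j < j. The positions k left of j with P[j] \<prec> P[k] form the
window between PP P j (or 0 if j has no prefix parent) and j, and PC P j is the minimum of that
window. Hence a child has the same prefix parent as its parent unless the parent has none, and no
position has two children: the window of the later child contains the earlier one, contradicting
P[j] \<prec> P[PC P j]. Thus GP P m i is the unique child of i if there is one and PP P i otherwise.
The condition on PC is the condition on GP at positions with a child; the condition on PP at i
with child j follows from S[j] \<preceq> S[i] and the condition at j, by downward induction on i.
\<close>

lemma prec_iff_less: "prec S i j \<longleftrightarrow> (S i, i) < (S j, j)"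
  by (auto simp: prec_def)

lemma preceq_iff_le: "preceq S i j \<longleftrightarrow> (S i, i) \<le> (S j, j)"
  by (auto simp: preceq_def prec_def)

lemma prec_asym: "prec S i j \<Longrightarrow> \<not> prec S j i"
  by (auto simp: prec_def)

lemma preceq_refl [simp]: "preceq S i i"
  by (simp add: preceq_def)

lemma preceq_trans: "preceq S i j \<Longrightarrow> preceq S j k \<Longrightarrow> preceq S i k"
  unfolding preceq_iff_le by (rule order_trans)

lemma minidx_is_min:
  assumes "a \<le> b"
  shows "a \<le> minidx S a b \<and> minidx S a b \<le> b \<and> (\<forall>k. a \<le> k \<and> k \<le> b \<longrightarrow> preceq S (minidx S a b) k)"
proof -
  obtain j where "is_arg_min (\<lambda>k. (S k, k)) (\<lambda>k. k \<in> {a..b}) j"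
    using ex_is_arg_min_if_finite[of "{a..b}"] assms by fastforce
  then have "a \<le> j \<and> j \<le> b \<and> (\<forall>k. a \<le> k \<and> k \<le> b \<longrightarrow> preceq S j k)"
    by (auto simp: is_arg_min_linorder preceq_iff_le)
  moreover have "j' = j" if "a \<le> j' \<and> j' \<le> b \<and> (\<forall>k. a \<le> k \<and> k \<le> b \<longrightarrow> preceq S j' k)" for j'
    using that calculation by (force simp: preceq_iff_le)
  ultimately show ?thesis
    unfolding minidx_def by (rule theI)
qed

text \<open>PP P i with the no-parent case PP P i = i encoded as 0, so that the positions k with
  P[i] \<prec> P[k] left of i are uniformly the interval (left_bound P i, i).\<close>
definition left_bound :: "(nat \<Rightarrow> 'a::linorder) \<Rightarrow> nat \<Rightarrow> nat" where
  "left_bound P i = (if PP P i = i then 0 else PP P i)"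

lemma PP_pos: "PP P i \<noteq> i \<Longrightarrow> 1 \<le> PP P i"
proof -
  let ?A = "{j. 1 \<le> j \<and> j < i \<and> prec P j i}"
  assume "PP P i \<noteq> i"
  then have "?A \<noteq> {}" and "PP P i = Max ?A"
    unfolding PP_def by (auto split: if_splits)
  moreover have "finite ?A" by (rule finite_subset[of _ "{..<i}"]) auto
  ultimately have "Max ?A \<in> ?A" by (intro Max_in)
  with \<open>PP P i = Max ?A\<close> show ?thesis by simp
qed

lemma PP_conv_left_bound: "PP P i = (if left_bound P i = 0 then i else left_bound P i)"
  using PP_pos[of P i] by (auto simp: left_bound_def)

lemma left_bound_window:
  assumes "1 \<le> i"
  shows "left_bound P i < i \<and> (left_bound P i = 0 \<or> prec P (left_bound P i) i)
    \<and> (\<forall>k. left_bound P i < k \<and> k < i \<longrightarrow> prec P i k)"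
proof (cases "\<exists>j. 1 \<le> j \<and> j < i \<and> prec P j i")
  case True
  let ?A = "{j. 1 \<le> j \<and> j < i \<and> prec P j i}"
  have fin: "finite ?A" by (rule finite_subset[of _ "{..<i}"]) auto
  have max: "Max ?A \<in> ?A" using Max_in[OF fin] True by blast
  have "prec P i k" if "Max ?A < k" "k < i" for k
  proof -
    have "k \<notin> ?A" using that Max_ge[OF fin, of k] by linarith
    then show ?thesis using that max by (auto simp: prec_iff_less)
  qed
  with max show ?thesis
    using True unfolding left_bound_def PP_def by auto
next
  case False
  then have "prec P i k" if "1 \<le> k" "k < i" for k
    using that by (auto simp: prec_iff_less)
  with False assms show ?thesis
    unfolding left_bound_def PP_def by auto
qed

lemma left_bound_eqI:
  assumes "p < c" "p = 0 \<or> prec P p c" "\<forall>k. p < k \<and> k < c \<longrightarrow> prec P c k"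
  shows "left_bound P c = p"
proof -
  have "1 \<le> c" using assms(1) by simp
  note lb = left_bound_window[OF this, of P]
  have "\<not> left_bound P c < p"
  proof
    assume "left_bound P c < p"
    then have "prec P c p" using lb assms(1) by blast
    moreover have "prec P p c" using \<open>left_bound P c < p\<close> assms(2) by simp
    ultimately show False by (auto dest: prec_asym)
  qed
  moreover have "\<not> p < left_bound P c"
  proof
    assume "p < left_bound P c"
    then have "prec P c (left_bound P c)" using lb assms(3) by blast
    moreover have "prec P (left_bound P c) c" using \<open>p < left_bound P c\<close> lb by simp
    ultimately show False by (auto dest: prec_asym)
  qed
  ultimately show ?thesis by simp
qed

lemma PC_eq_minidx:
  assumes "1 \<le> i" "PC P i \<noteq> i"
  shows "left_bound P i + 1 \<le> i - 1 \<and> PC P i = minidx P (left_bound P i + 1) (i - 1)"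
proof -
  have "i \<noteq> 1" "left_bound P i < i"
    using assms left_bound_window[of i P] unfolding PC_def by auto
  with assms show ?thesis
    unfolding PC_def left_bound_def by (auto split: if_splits)
qed

lemma PC_less:
  assumes "1 \<le> i" "PC P i \<noteq> i"
  shows "PC P i < i"
proof -
  note pc = PC_eq_minidx[OF assms]
  have "PC P i \<le> i - 1"
    using minidx_is_min[OF conjunct1[OF pc], of P] conjunct2[OF pc] by simp
  with assms(1) show ?thesis by simp
qed

lemma PC_child:
  assumes "PC P j < j"
  shows "left_bound P j < PC P j \<and> prec P j (PC P j)
    \<and> (\<forall>k. left_bound P j < k \<and> k < j \<longrightarrow> preceq P (PC P j) k)"
proof -
  have "1 \<le> j" "PC P j \<noteq> j" using assms by auto
  note pc = PC_eq_minidx[OF this] and lb = left_bound_window[OF \<open>1 \<le> j\<close>, of P]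
  have "left_bound P j < PC P j \<and> (\<forall>k. left_bound P j < k \<and> k < j \<longrightarrow> preceq P (PC P j) k)"
    using minidx_is_min[OF conjunct1[OF pc], of P] conjunct2[OF pc] by auto
  with lb assms show ?thesis by blast
qed

lemma left_bound_PC:
  assumes "PC P j < j"
  shows "left_bound P (PC P j) = left_bound P j"
proof (rule left_bound_eqI)
  note child = PC_child[OF assms] and lb = left_bound_window[of j P]
  show "left_bound P j < PC P j" using child by blast
  show "left_bound P j = 0 \<or> prec P (left_bound P j) (PC P j)"
    using child lb assms by (auto simp: prec_iff_less)
  show "\<forall>k. left_bound P j < k \<and> k < PC P j \<longrightarrow> prec P (PC P j) k"
    using child assms by (auto simp: preceq_def)
qed

lemma PC_child_unique:
  assumes "PC P j1 < j1" "PC P j2 < j2" "PC P j1 = PC P j2"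
  shows "j1 = j2"
proof -
  have False if "PC P j < j" "PC P j' < j'" "PC P j = PC P j'" "j < j'" for j j'
  proof -
    have "prec P j (PC P j)" using PC_child[OF that(1)] by blast
    moreover have "left_bound P j' < PC P j'"
      and "\<forall>k. left_bound P j' < k \<and> k < j' \<longrightarrow> preceq P (PC P j') k"
      using PC_child[OF that(2)] by blast+
    then have "preceq P (PC P j) j" using that by simp
    ultimately show False using that(1) by (auto simp: preceq_def dest: prec_asym)
  qed
  then show ?thesis
    using assms by (metis linorder_neqE_nat)
qed

lemma GP_eq_child:
  assumes "i < j" "j \<le> m" "PC P j = i"
  shows "GP P m i = j"
proof -
  have "j' = j" if "i < j'" "j' \<le> m" "PC P j' = i" for j'
    using that assms PC_child_unique[of P j' j] by simp
  then have "(THE j. i < j \<and> j \<le> m \<and> PC P j = i) = j"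
    using assms by (intro the_equality) blast+
  moreover have "\<exists>j. i < j \<and> j \<le> m \<and> PC P j = i" using assms by blast
  ultimately show ?thesis unfolding GP_def by simp
qed

lemma GP_eq_PP: "\<nexists>j. i < j \<and> j \<le> m \<and> PC P j = i \<Longrightarrow> GP P m i = PP P i"
  unfolding GP_def by (rule if_not_P)

lemma preceq_PP_if_preceq_GP:
  assumes GP: "\<forall>i. 1 \<le> i \<and> i \<le> m \<longrightarrow> preceq S (GP P m i) i"
  shows "1 \<le> i \<Longrightarrow> i \<le> m \<Longrightarrow> preceq S (PP P i) i"
proof (induction "m - i" arbitrary: i rule: less_induct)
  case less
  show ?case
  proof (cases "\<exists>j. i < j \<and> j \<le> m \<and> PC P j = i")
    case True
    then obtain j where j: "i < j" "j \<le> m" "PC P j = i" by blast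
    show ?thesis
    proof (cases "left_bound P i = 0")
      case False
      have "m - j < m - i" using j less.prems by (intro diff_less_mono2) auto
      then have "preceq S (PP P j) j" using less.hyps j(2) less.prems(1) \<open>i < j\<close> by simp
      moreover have "PP P i = PP P j"
        using left_bound_PC[of P j] j False by (simp add: PP_conv_left_bound)
      moreover have "preceq S j i"
        using GP less.prems unfolding GP_eq_child[OF j, symmetric] by blast
      ultimately show ?thesis using preceq_trans by metis
    qed (simp add: PP_conv_left_bound)
  next
    case False
    have "preceq S (GP P m i) i" using GP less.prems by blast
    then show ?thesis using GP_eq_PP[OF False] by simp
  qed
qed

lemma preceq_GP_if_preceq_PP_PC:
  assumes PP_PC: "\<forall>i. 1 \<le> i \<and> i \<le> m \<longrightarrow> preceq S (PP P i) i \<and> preceq S i (PC P i)"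
    and "1 \<le> i" "i \<le> m"
  shows "preceq S (GP P m i) i"
proof (cases "\<exists>j. i < j \<and> j \<le> m \<and> PC P j = i")
  case True
  then obtain j where j: "i < j" "j \<le> m" "PC P j = i" by blast
  then have "preceq S j (PC P j)" using PP_PC \<open>1 \<le> i\<close> by (metis le_trans less_imp_le)
  with j show ?thesis by (simp add: GP_eq_child)
next
  case False
  then show ?thesis using PP_PC assms by (simp add: GP_eq_PP)
qed

lemma preceq_PC_if_preceq_GP:
  assumes GP: "\<forall>i. 1 \<le> i \<and> i \<le> m \<longrightarrow> preceq S (GP P m i) i"
    and "1 \<le> i" "i \<le> m"
  shows "preceq S i (PC P i)"
proof (cases "PC P i = i")
  case False
  then have child: "PC P i < i" using PC_less \<open>1 \<le> i\<close> by blast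
  then have "1 \<le> PC P i" using PC_child[OF child] by linarith
  then have "preceq S (GP P m (PC P i)) (PC P i)" using GP \<open>i \<le> m\<close> child by simp
  then show ?thesis using GP_eq_child[of "PC P i" i m P] child \<open>i \<le> m\<close> by simp
qed simp

theorem mainTheorem3:
  fixes P S :: "nat \<Rightarrow> 'a::linorder" and m :: nat
  shows "(\<forall>i. 1 \<le> i \<and> i \<le> m \<longrightarrow> preceq S (PP P i) i \<and> preceq S i (PC P i))
     \<longleftrightarrow> (\<forall>i. 1 \<le> i \<and> i \<le> m \<longrightarrow> preceq S (GP P m i) i)"
  using preceq_GP_if_preceq_PP_PC[of m S P] preceq_PP_if_preceq_GP[of m S P]
    preceq_PC_if_preceq_GP[of m S P] by blast

end
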